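(* Let $r_\pm=(11\pm5\sqrt5)/2$ and $r\in\mathbb{R}\setminus\{0,r_-,r_+\}$. Then the real projective curve $E_r$ has an unbounded connected component which contains the points $[1:0:0],[0:1:0],[1:-1:0],[-1:0:1],[0:-1:1]$ and which is otherwise disjoint from the coordinate axes $\{x=0\},\{y=0\}$ and from the line at infinity $\{z=0\}$. If $r\in(-\infty,r_-)\cup(0,r_+)$ this is the only component. If $r\in(r_-,0)$, $E_r$ has exactly one further component, which is bounded and lies in the open quadrant $\{x<0,y<0\}$. If $r\in(r_+,\infty)$, $E_r$ has exactly one further component, which is bounded and lies in the open quadrant $\{x>0,y>0\}$.
   Context: $E_r\subset\mathbb{RP}^2$ is the zero set of $Q(x,y,z)=x^2y+xy^2+x^2z+y^2z+(3-r)xyz+2xz^2+2yz^2+z^3$, the homogenization of $(x+1)(y+1)(x+y+1)-rxy$. Affine points $(x,y)$ are identified with $[x:y:1]$. A component is unbounded if its intersection with the affine plane $\{z\ne0\}$ is an unbounded subset of $\mathbb{R}^2$, bounded otherwise. *)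

theory Defs
  imports "HOL-Analysis.Analysis"
begin

text \<open>Real projective plane: points are punctured lines through the origin in R^3,
  carrying the quotient topology of R^3 minus the origin.\<close>

definition pcls :: "real^3 \<Rightarrow> (real^3) set" where
  "pcls v = {c *\<^sub>R v | c. c \<noteq> 0}"

definition RP2 :: "(real^3) set set" where
  "RP2 = pcls ` (- {0})"

definition RP2_open :: "(real^3) set set \<Rightarrow> bool" where
  "RP2_open U \<longleftrightarrow> U \<subseteq> RP2 \<and> open {v. v \<noteq> 0 \<and> pcls v \<in> U}"

lemma istopology_RP2_open: "istopology RP2_open"
  unfolding istopology_def
proof (intro conjI allI impI)
  fix S T assume "RP2_open S" "RP2_open T"
  moreover have "{v. v \<noteq> 0 \<and> pcls v \<in> S \<inter> T} = {v. v \<noteq> 0 \<and> pcls v \<in> S} \<inter> {v. v \<noteq> 0 \<and> pcls v \<in> T}" by auto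
  ultimately show "RP2_open (S \<inter> T)"
    unfolding RP2_open_def by auto
next
  fix K assume K: "\<forall>S\<in>K. RP2_open S"
  have "{v. v \<noteq> 0 \<and> pcls v \<in> \<Union>K} = (\<Union>S\<in>K. {v. v \<noteq> 0 \<and> pcls v \<in> S})" by auto
  moreover have "open (\<Union>S\<in>K. {v. v \<noteq> 0 \<and> pcls v \<in> S})"
    using K unfolding RP2_open_def by auto
  ultimately show "RP2_open (\<Union>K)" using K unfolding RP2_open_def by auto
qed

definition RP2_top :: "(real^3) set topology" where
  "RP2_top = topology RP2_open"

definition pt :: "real \<Rightarrow> real \<Rightarrow> real \<Rightarrow> (real^3) set" where
  "pt x y z = pcls (vector [x, y, z])"

definition Qr :: "real \<Rightarrow> real \<Rightarrow> real \<Rightarrow> real \<Rightarrow> real" where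
  "Qr r x y z = x^2*y + x*y^2 + x^2*z + y^2*z + (3 - r)*x*y*z + 2*x*z^2 + 2*y*z^2 + z^3"

definition Ecurve :: "real \<Rightarrow> (real^3) set set" where
  "Ecurve r = {pt x y z | x y z. (x, y, z) \<noteq> (0, 0, 0) \<and> Qr r x y z = 0}"

definition affine_part :: "(real^3) set set \<Rightarrow> (real \<times> real) set" where
  "affine_part S = {(x, y). pt x y 1 \<in> S}"

definition line_x0 :: "(real^3) set set" where
  "line_x0 = {pt 0 y z | y z. (y, z) \<noteq> (0, 0)}"
definition line_y0 :: "(real^3) set set" where
  "line_y0 = {pt x 0 z | x z. (x, z) \<noteq> (0, 0)}"
definition line_z0 :: "(real^3) set set" where
  "line_z0 = {pt x y 0 | x y. (x, y) \<noteq> (0, 0)}"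

definition r_minus :: real where "r_minus = (11 - 5 * sqrt 5) / 2"
definition r_plus :: real where "r_plus = (11 + 5 * sqrt 5) / 2"

end

theory Submission
  imports Defs
begin

text \<open>In the coordinates \<open>s = x + y\<close>, \<open>d = x - y\<close> the curve \<open>E\<^sub>r\<close> is the double cover
  \<open>d\<^sup>2 (r - 1 - s) = h(s)\<close> of the \<open>s\<close>-line, with the cubic \<open>h(s) = -s\<^sup>3 + (r - 5) s\<^sup>2 - 8 s - 4\<close>,
  plus three points at infinity. Since \<open>h < 0\<close> on \<open>[r - 1, \<infinity>)\<close>, the curve lies over the
  \<open>s \<le> r - 1\<close> where \<open>h(s) \<ge> 0\<close> and over all \<open>s > r - 1\<close>, and the discriminant of \<open>h\<close> has the
  sign of \<open>r (r - r\<^sub>+) (r - r\<^sub>-)\<close>. If \<open>h\<close> has one real root \<open>L\<close>, the pieces over \<open>s \<le> L\<close> and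
  \<open>s > r - 1\<close> are joined through the points at infinity into a single unbounded connected set. If
  \<open>h\<close> has three roots \<open>e\<^sub>1 < e\<^sub>2 < e\<^sub>3\<close>, there is in addition an oval over \<open>[e\<^sub>2, e\<^sub>3]\<close>, which
  open sets defined by sign conditions on homogeneous functions separate from the rest.\<close>

section \<open>The real projective plane\<close>

lemma pcls_scaleR: "c \<noteq> 0 \<Longrightarrow> pcls (c *\<^sub>R v) = pcls v"
  unfolding pcls_def
proof safe
  fix d :: real assume "c \<noteq> 0" "d \<noteq> 0"
  then show "\<exists>e. d *\<^sub>R c *\<^sub>R v = e *\<^sub>R v \<and> e \<noteq> 0" by (intro exI[of _ "d * c"]) auto
  show "\<exists>e. d *\<^sub>R v = e *\<^sub>R c *\<^sub>R v \<and> e \<noteq> 0" by (intro exI[of _ "d / c"]) (use \<open>c \<noteq> 0\<close> \<open>d \<noteq> 0\<close> in auto)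
qed

lemma pcls_eq_imp_scaleR: "pcls v = pcls w \<Longrightarrow> \<exists>c. c \<noteq> 0 \<and> w = c *\<^sub>R v"
proof -
  assume "pcls v = pcls w"
  moreover have "w \<in> pcls w" unfolding pcls_def by (auto intro: exI[of _ 1])
  ultimately show ?thesis unfolding pcls_def by auto
qed

lemma pcls_in_RP2: "v \<noteq> 0 \<Longrightarrow> pcls v \<in> RP2"
  by (auto simp: RP2_def)

lemma openin_RP2_top: "openin RP2_top = RP2_open"
  by (simp add: RP2_top_def istopology_RP2_open)

lemma topspace_RP2_top: "topspace RP2_top = RP2"
proof -
  have "{v. v \<noteq> 0 \<and> pcls v \<in> RP2} = - {0}" by (auto simp: RP2_def)
  then have "RP2_open RP2" unfolding RP2_open_def by auto
  then show ?thesis unfolding topspace_def openin_RP2_top by (auto simp: RP2_open_def)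
qed

lemma continuous_map_pcls:
  assumes "continuous_on I f" "\<And>t. t \<in> I \<Longrightarrow> f t \<noteq> 0"
  shows "continuous_map (top_of_set I) RP2_top (\<lambda>t. pcls (f t))"
  unfolding continuous_map_def topspace_RP2_top openin_RP2_top
proof (intro conjI allI impI)
  show "(\<lambda>t. pcls (f t)) \<in> topspace (top_of_set I) \<rightarrow> RP2"
    using assms(2) pcls_in_RP2 by auto
  fix U assume "RP2_open U"
  then have U: "open {v. v \<noteq> 0 \<and> pcls v \<in> U}" by (simp add: RP2_open_def)
  have "{t \<in> topspace (top_of_set I). pcls (f t) \<in> U} = I \<inter> f -` {v. v \<noteq> 0 \<and> pcls v \<in> U}"
    using assms(2) by auto
  then show "openin (top_of_set I) {t \<in> topspace (top_of_set I). pcls (f t) \<in> U}"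
    using continuous_openin_preimage_gen[OF assms(1) U] by simp
qed

lemma connectedin_pcls_image:
  assumes "continuous_on I f" "\<And>t. t \<in> I \<Longrightarrow> f t \<noteq> 0" "connected I"
  shows "connectedin RP2_top ((\<lambda>t. pcls (f t)) ` I)"
  using connectedin_continuous_map_image[OF continuous_map_pcls[OF assms(1,2)]] assms(3) by simp

definition pos_region :: "(real^3 \<Rightarrow> real) \<Rightarrow> (real^3) set set" where
  "pos_region f = {pcls v | v. v \<noteq> 0 \<and> 0 < f v}"

lemma pcls_in_pos_region_iff:
  assumes hom: "\<And>c v. c \<noteq> 0 \<Longrightarrow> \<exists>k>0. f (c *\<^sub>R v) = k * f v" and "w \<noteq> 0"
  shows "pcls w \<in> pos_region f \<longleftrightarrow> 0 < f w"
proof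
  assume "pcls w \<in> pos_region f"
  then obtain v where v: "v \<noteq> 0" "0 < f v" "pcls v = pcls w" by (auto simp: pos_region_def)
  then obtain c where "c \<noteq> 0" "w = c *\<^sub>R v" using pcls_eq_imp_scaleR by blast
  with hom obtain k where "k > 0" "f w = k * f v" by blast
  then show "0 < f w" using v(2) by simp
qed (use assms in \<open>auto simp: pos_region_def\<close>)

lemma openin_pos_region:
  assumes hom: "\<And>c v. c \<noteq> 0 \<Longrightarrow> \<exists>k>0. f (c *\<^sub>R v) = k * f v"
    and cont: "continuous_on UNIV f"
  shows "openin RP2_top (pos_region f)"
  unfolding openin_RP2_top RP2_open_def
proof
  show "pos_region f \<subseteq> RP2" by (auto simp: pos_region_def pcls_in_RP2)
  have "{v. v \<noteq> 0 \<and> pcls v \<in> pos_region f} = - {0} \<inter> {v. 0 < f v}"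
    using pcls_in_pos_region_iff[OF hom] by auto
  moreover have "open {v. 0 < f v}" using open_Collect_less[OF continuous_on_const cont] by simp
  moreover have "open (- {0 :: real^3})" by (simp add: open_Compl)
  ultimately show "open {v. v \<noteq> 0 \<and> pcls v \<in> pos_region f}" by (simp add: open_Int)
qed

lemma connected_component_of_clopen:
  assumes "connectedin X K" "openin X K" "closedin X K" "x \<in> K"
  shows "connected_component_of_set X x = K"
  using assms connectedin_clopen_cases by (intro connected_component_of_unique) (auto simp: disjnt_def)

lemma connected_components_of_clopen_pair:
  assumes top: "topspace X = C \<union> D" and disj: "C \<inter> D = {}" and ne: "C \<noteq> {}" "D \<noteq> {}"
    and conn: "connectedin X C" "connectedin X D" and op: "openin X C" "openin X D"
  shows "connected_components_of X = {C, D}"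
proof -
  have "topspace X - C = D" "topspace X - D = C" using top disj by auto
  then have "closedin X C" "closedin X D" using op top by (auto simp: closedin_def)
  then have "connected_component_of_set X x = (if x \<in> C then C else D)" if "x \<in> topspace X" for x
    using that top conn op connected_component_of_clopen[of X C x] connected_component_of_clopen[of X D x]
    by auto
  then have "connected_components_of X = (\<lambda>x. if x \<in> C then C else D) ` (C \<union> D)"
    unfolding connected_components_of_def using top by (auto intro!: image_cong)
  also have "\<dots> = {C, D}" using ne disj by auto
  finally show ?thesis .
qed

section \<open>Coordinates adapted to the symmetry \<open>x \<leftrightarrow> y\<close>\<close>

definition sdz :: "real \<Rightarrow> real \<Rightarrow> real \<Rightarrow> real^3" where
  "sdz s d z = vector [(s + d) / 2, (s - d) / 2, z]"

definition coord_s :: "real^3 \<Rightarrow> real" where "coord_s v = v$1 + v$2"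
definition coord_d :: "real^3 \<Rightarrow> real" where "coord_d v = v$1 - v$2"

lemma sdz_nth [simp]: "sdz s d z $ 1 = (s + d) / 2" "sdz s d z $ 2 = (s - d) / 2" "sdz s d z $ 3 = z"
  by (simp_all add: sdz_def)

lemma coord_sdz [simp]: "coord_s (sdz s d z) = s" "coord_d (sdz s d z) = d"
  by (simp_all add: coord_s_def coord_d_def field_simps)

lemma coord_scaleR [simp]: "coord_s (c *\<^sub>R v) = c * coord_s v" "coord_d (c *\<^sub>R v) = c * coord_d v"
  by (simp_all add: coord_s_def coord_d_def algebra_simps)

lemma continuous_on_coord [continuous_intros]:
  "continuous_on S coord_s" "continuous_on S coord_d"
  unfolding coord_s_def coord_d_def by (intro continuous_intros)+

lemma continuous_on_sdz [continuous_intros]: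
  assumes "continuous_on I f" "continuous_on I g" "continuous_on I h"
  shows "continuous_on I (\<lambda>t. sdz (f t) (g t) (h t))"
proof -
  have "sdz s d z = ((s + d) / 2) *\<^sub>R axis 1 1 + ((s - d) / 2) *\<^sub>R axis 2 1 + z *\<^sub>R axis 3 1" for s d z
    unfolding vec_eq_iff forall_3 by (simp add: axis_def)
  then show ?thesis using assms by (simp only:) (intro continuous_intros; simp)
qed

lemma sdz_eq_iff: "sdz s d z = sdz s' d' z' \<longleftrightarrow> s = s' \<and> d = d' \<and> z = z'"
  unfolding vec_eq_iff forall_3 by auto

lemma sdz_eq_0_iff: "sdz s d z = 0 \<longleftrightarrow> s = 0 \<and> d = 0 \<and> z = 0"
  unfolding vec_eq_iff forall_3 by auto

lemma sdz_coords: "v = sdz (coord_s v) (coord_d v) (v$3)"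
  unfolding vec_eq_iff forall_3 coord_s_def coord_d_def by auto

lemma scaleR_sdz: "c *\<^sub>R sdz s d z = sdz (c * s) (c * d) (c * z)"
  unfolding vec_eq_iff forall_3 by (auto simp: algebra_simps)

lemma pt_eq_pcls_sdz: "pt x y z = pcls (sdz (x + y) (x - y) z)"
proof -
  have "vector [x, y, z] = sdz (x + y) (x - y) z" unfolding vec_eq_iff forall_3 by auto
  then show ?thesis by (simp add: pt_def)
qed

lemma pcls_sdz_eq_pt: "pcls (sdz s d z) = pt ((s + d) / 2) ((s - d) / 2) z"
  by (simp add: pt_eq_pcls_sdz field_simps)

lemma pcls_sdz_scale: "c \<noteq> 0 \<Longrightarrow> pcls (sdz (c * s) (c * d) (c * z)) = pcls (sdz s d z)"
  by (metis scaleR_sdz pcls_scaleR)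

lemma pcls_sdz_dehomogenize: "z \<noteq> 0 \<Longrightarrow> pcls (sdz s d z) = pcls (sdz (s / z) (d / z) 1)"
  using pcls_sdz_scale[of "1 / z" s d z] by simp

lemma pcls_sdz_affine_inj: "pcls (sdz s d 1) = pcls (sdz s' d' 1) \<Longrightarrow> s = s' \<and> d = d'"
  by (auto dest!: pcls_eq_imp_scaleR simp: scaleR_sdz sdz_eq_iff)

lemma pcls_sdz_affine_ne_infinity: "pcls (sdz s d 1) \<noteq> pcls (sdz S D 0)"
  by (auto dest!: pcls_eq_imp_scaleR simp: scaleR_sdz sdz_eq_iff)

lemma affine_part_iff: "(x, y) \<in> affine_part S \<longleftrightarrow> pcls (sdz (x + y) (x - y) 1) \<in> S"
  by (simp add: affine_part_def pt_eq_pcls_sdz)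

section \<open>The curve and the cubic \<open>h\<close>\<close>

definition Qvec :: "real \<Rightarrow> real^3 \<Rightarrow> real" where
  "Qvec r v = Qr r (v$1) (v$2) (v$3)"

lemma Qvec_sdz: "Qvec r (sdz s d z) = ((s^2 - d^2) * (s + (1 - r) * z) + 4 * z * (s + z)^2) / 4"
  unfolding Qvec_def Qr_def by (simp add: field_simps power2_eq_square power3_eq_cube)

lemma Qvec_scaleR: "Qvec r (c *\<^sub>R v) = c^3 * Qvec r v"
  unfolding Qvec_def Qr_def by (simp add: algebra_simps power2_eq_square power3_eq_cube)

lemma Ecurve_eq: "Ecurve r = {pcls v | v. v \<noteq> 0 \<and> Qvec r v = 0}"
proof -
  have "(\<exists>x y z. P = pt x y z \<and> (x, y, z) \<noteq> (0, 0, 0) \<and> Qr r x y z = 0) \<longleftrightarrow>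
        (\<exists>v. P = pcls v \<and> v \<noteq> 0 \<and> Qvec r v = 0)" for P
  proof
    assume "\<exists>x y z. P = pt x y z \<and> (x, y, z) \<noteq> (0, 0, 0) \<and> Qr r x y z = 0"
    then obtain x y z where "P = pt x y z" "(x, y, z) \<noteq> (0, 0, 0)" "Qr r x y z = 0" by blast
    then show "\<exists>v. P = pcls v \<and> v \<noteq> 0 \<and> Qvec r v = 0"
      by (intro exI[of _ "vector [x, y, z]"]) (auto simp: pt_def Qvec_def vec_eq_iff forall_3)
  next
    assume "\<exists>v. P = pcls v \<and> v \<noteq> 0 \<and> Qvec r v = 0"
    then obtain v where v: "P = pcls v" "v \<noteq> 0" "Qvec r v = 0" by blast
    have "vector [v$1, v$2, v$3] = v" unfolding vec_eq_iff forall_3 by simp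
    then have "P = pt (v$1) (v$2) (v$3)" using v(1) by (simp add: pt_def)
    moreover have "(v$1, v$2, v$3) \<noteq> (0, 0, 0)" using v(2) by (auto simp: vec_eq_iff forall_3)
    ultimately show "\<exists>x y z. P = pt x y z \<and> (x, y, z) \<noteq> (0, 0, 0) \<and> Qr r x y z = 0"
      using v(3) unfolding Qvec_def by blast
  qed
  then show ?thesis unfolding Ecurve_def by blast
qed

lemma pcls_in_Ecurve_iff: "w \<noteq> 0 \<Longrightarrow> pcls w \<in> Ecurve r \<longleftrightarrow> Qvec r w = 0"
  by (auto simp: Ecurve_eq Qvec_scaleR dest!: pcls_eq_imp_scaleR)

lemma topspace_Ecurve: "topspace (subtopology RP2_top (Ecurve r)) = Ecurve r"
  by (auto simp: topspace_RP2_top Ecurve_eq pcls_in_RP2)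

definition hcubic :: "real \<Rightarrow> real \<Rightarrow> real" where
  "hcubic r s = - (s^3) + (r - 5) * s^2 - 8 * s - 4"

lemma continuous_on_hcubic [continuous_intros]: "continuous_on S (hcubic r)"
  unfolding hcubic_def by (intro continuous_intros)

lemma Qvec_sdz_affine: "Qvec r (sdz s d 1) = 0 \<longleftrightarrow> d^2 * (s + 1 - r) = - hcubic r s"
  unfolding Qvec_sdz hcubic_def by (auto simp: algebra_simps power2_eq_square power3_eq_cube)

lemma Qvec_sdz_dehomogenize:
  assumes "z \<noteq> 0"
  shows "Qvec r (sdz s d z) = 0 \<longleftrightarrow> (d / z)^2 * (s / z + 1 - r) = - hcubic r (s / z)"
proof -
  have "sdz s d z = z *\<^sub>R sdz (s / z) (d / z) 1" using assms by (simp add: scaleR_sdz)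
  then show ?thesis using assms by (simp add: Qvec_scaleR Qvec_sdz_affine)
qed

lemma Ecurve_cases:
  assumes "P \<in> Ecurve r"
  obtains "P \<in> {pcls (sdz 1 1 0), pcls (sdz 1 (-1) 0), pcls (sdz 0 1 0)}"
    | s d where "P = pcls (sdz s d 1)" "d^2 * (s + 1 - r) = - hcubic r s"
proof -
  obtain v where v: "v \<noteq> 0" "Qvec r v = 0" "P = pcls v" using assms by (auto simp: Ecurve_eq)
  define s d z where "s = coord_s v" and "d = coord_d v" and "z = v$3"
  have P: "P = pcls (sdz s d z)" and Q: "Qvec r (sdz s d z) = 0" and ne: "sdz s d z \<noteq> 0"
    unfolding s_def d_def z_def using v sdz_coords[of v] by simp_all
  show thesis
  proof (cases "z = 0")
    case True
    then have "(s^2 - d^2) * s = 0" using Q by (simp add: Qvec_sdz)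
    then have "s = 0 \<and> d \<noteq> 0 \<or> s \<noteq> 0 \<and> (d = s \<or> d = - s)"
      using ne True by (auto simp: sdz_eq_0_iff power2_eq_iff)
    then have "P \<in> {pcls (sdz 1 1 0), pcls (sdz 1 (-1) 0), pcls (sdz 0 1 0)}"
      using pcls_sdz_scale[of d 0 1 0] pcls_sdz_scale[of s 1 1 0] pcls_sdz_scale[of s 1 "-1" 0]
      unfolding P True by auto
    then show thesis by (rule that(1))
  next
    case False
    then show thesis
      using that(2) P Q pcls_sdz_dehomogenize Qvec_sdz_dehomogenize by metis
  qed
qed

lemma hcubic_neg:
  assumes "r \<noteq> 0" "r - 1 \<le> s"
  shows "hcubic r s < 0"
proof -
  have "hcubic r s = - (s^2 * (s + 1 - r) + 4 * (s + 1)^2)"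
    unfolding hcubic_def by (simp add: algebra_simps power2_eq_square power3_eq_cube)
  moreover have "0 < s^2 * (s + 1 - r) + 4 * (s + 1)^2"
  proof (cases "s = -1")
    case True
    then show ?thesis using assms by simp
  next
    case False
    then have "0 < (s + 1)^2" by simp
    moreover have "0 \<le> s^2 * (s + 1 - r)" using assms by simp
    ultimately show ?thesis by linarith
  qed
  ultimately show ?thesis by linarith
qed

lemma hcubic_minus_one: "hcubic r (-1) = r"
  unfolding hcubic_def by simp

lemma hcubic_root_exists:
  assumes "r \<noteq> 0"
  obtains a where "hcubic r a = 0" "a < 0" "a < r - 1"
proof -
  define M where "M = \<bar>r\<bar> + 10"
  define b where "b = min 0 (r - 1)"
  have hb: "hcubic r b < 0"
    using hcubic_neg[OF assms, of b] unfolding b_def by (cases "r - 1 \<le> 0") (auto simp: hcubic_def)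
  have "M^2 * 5 \<le> M^2 * (M + r - 5)" "100 \<le> M^2" "10 \<le> M"
    using power_mono[of 10 M 2] unfolding M_def by (auto intro!: mult_left_mono)
  moreover have "hcubic r (- M) = M^2 * (M + r - 5) + 8 * M - 4"
    unfolding hcubic_def by (simp add: algebra_simps power2_eq_square power3_eq_cube)
  ultimately have hM: "0 < hcubic r (- M)" by linarith
  have "- M \<le> b" unfolding M_def b_def by auto
  moreover have "continuous_on {- M..b} (hcubic r)" by (rule continuous_on_hcubic)
  ultimately obtain a where "- M \<le> a" "a \<le> b" "hcubic r a = 0"
    using IVT2'[of "hcubic r" b 0 "- M"] hb hM by auto
  moreover have "a \<noteq> b" using hb \<open>hcubic r a = 0\<close> by auto
  ultimately show thesis using that unfolding b_def by auto
qed

text \<open>Splitting off a root \<open>a\<close> leaves a quadratic factor whose discriminant, times the square of its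
  value at \<open>a\<close>, is the discriminant \<open>16 r (r\<^sup>2 - 11 r - 1)\<close> of \<open>h\<close>.\<close>

lemma hcubic_split_root:
  assumes "hcubic r a = 0"
  defines "\<beta> \<equiv> a - r + 5" and "\<gamma> \<equiv> a * (a - r + 5) + 8"
  shows "hcubic r s = - ((s - a) * (s^2 + \<beta> * s + \<gamma>))"
    and "(\<beta>^2 - 4 * \<gamma>) * (a^2 + \<beta> * a + \<gamma>)^2 = 16 * r * (r^2 - 11 * r - 1)"
proof -
  show "hcubic r s = - ((s - a) * (s^2 + \<beta> * s + \<gamma>))"
    using assms unfolding hcubic_def by (simp add: algebra_simps power2_eq_square power3_eq_cube)
  show "(\<beta>^2 - 4 * \<gamma>) * (a^2 + \<beta> * a + \<gamma>)^2 = 16 * r * (r^2 - 11 * r - 1)"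
    using assms(1) unfolding hcubic_def \<beta>_def \<gamma>_def by algebra
qed

lemma hcubic_one_root:
  assumes "r \<noteq> 0" "r * (r^2 - 11 * r - 1) < 0"
  obtains L where "L < 0" "L < r - 1" "hcubic r L = 0" "\<And>s. 0 \<le> hcubic r s \<longleftrightarrow> s \<le> L"
proof -
  obtain a where a: "hcubic r a = 0" "a < 0" "a < r - 1" using hcubic_root_exists[OF assms(1)] .
  define \<beta> \<gamma> where "\<beta> = a - r + 5" and "\<gamma> = a * (a - r + 5) + 8"
  note split = hcubic_split_root[OF a(1), folded \<beta>_def \<gamma>_def]
  have disc: "\<beta>^2 - 4 * \<gamma> < 0"
  proof (rule ccontr)
    assume "\<not> \<beta>^2 - 4 * \<gamma> < 0"
    then have "0 \<le> (\<beta>^2 - 4 * \<gamma>) * (a^2 + \<beta> * a + \<gamma>)^2" by simp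
    then show False using split(2) assms(2) by simp
  qed
  have q: "0 < s^2 + \<beta> * s + \<gamma>" for s
  proof -
    have "4 * (s^2 + \<beta> * s + \<gamma>) = (2 * s + \<beta>)^2 - (\<beta>^2 - 4 * \<gamma>)"
      by (simp add: algebra_simps power2_eq_square)
    moreover have "0 < (2 * s + \<beta>)^2 - (\<beta>^2 - 4 * \<gamma>)"
      using disc zero_le_power2[of "2 * s + \<beta>"] by linarith
    ultimately show ?thesis by simp
  qed
  have "0 \<le> hcubic r s \<longleftrightarrow> s \<le> a" for s
    using q[of s] unfolding split(1) by (simp add: mult_le_0_iff zero_le_mult_iff)
  with a that show thesis by blast
qed

lemma cubic_roots_sorted:
  fixes a b c :: real
  assumes "b < c" "a \<noteq> b" "a \<noteq> c"
  obtains e1 e2 e3 where "e1 < e2" "e2 < e3" "\<And>s. (s - a) * ((s - b) * (s - c)) = (s - e1) * (s - e2) * (s - e3)"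
proof -
  consider "a < b" | "b < a" "a < c" | "c < a" using assms by linarith
  then show thesis
  proof cases
    case 1
    then show thesis using assms by (intro that[of a b c]) (auto simp: algebra_simps)
  next
    case 2
    then show thesis using assms by (intro that[of b a c]) (auto simp: algebra_simps)
  next
    case 3
    then show thesis using assms by (intro that[of b c a]) (auto simp: algebra_simps)
  qed
qed

lemma hcubic_three_roots:
  assumes "r \<noteq> 0" "0 < r * (r^2 - 11 * r - 1)"
  obtains e1 e2 e3 where "e1 < e2" "e2 < e3" "e3 < r - 1" "e1 < 0"
    "\<And>s. hcubic r s = - ((s - e1) * (s - e2) * (s - e3))"
proof -
  obtain a where a: "hcubic r a = 0" "a < 0" "a < r - 1" using hcubic_root_exists[OF assms(1)] .
  define \<beta> \<gamma> where "\<beta> = a - r + 5" and "\<gamma> = a * (a - r + 5) + 8"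
  define \<delta> where "\<delta> = \<beta>^2 - 4 * \<gamma>"
  note split = hcubic_split_root[OF a(1), folded \<beta>_def \<gamma>_def, folded \<delta>_def]
  have pos: "0 < \<delta> * (a^2 + \<beta> * a + \<gamma>)^2" using split(2) assms(2) by simp
  have \<delta>: "0 < \<delta>"
  proof (rule ccontr)
    assume "\<not> 0 < \<delta>"
    then have "\<delta> * (a^2 + \<beta> * a + \<gamma>)^2 \<le> 0" by (simp add: mult_nonpos_nonneg)
    then show False using pos by simp
  qed
  define b c where "b = (- \<beta> - sqrt \<delta>) / 2" and "c = (- \<beta> + sqrt \<delta>) / 2"
  have bc: "b < c" using \<delta> unfolding b_def c_def by simp
  have quad: "s^2 + \<beta> * s + \<gamma> = (s - b) * (s - c)" for s
    using \<delta> unfolding b_def c_def \<delta>_def by (simp add: field_simps power2_eq_square)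
  have "a \<noteq> b" "a \<noteq> c" using pos quad[of a] by auto
  then obtain e1 e2 e3 where e: "e1 < e2" "e2 < e3"
    and fac: "\<And>s. (s - a) * ((s - b) * (s - c)) = (s - e1) * (s - e2) * (s - e3)"
    using cubic_roots_sorted[OF bc] by metis
  have h: "hcubic r s = - ((s - e1) * (s - e2) * (s - e3))" for s
    using split(1)[of s] quad[of s] fac[of s] by simp
  have "e3 < r - 1" using hcubic_neg[OF assms(1), of e3] h[of e3] by force
  moreover have "e1 < 0"
  proof (rule ccontr)
    assume "\<not> e1 < 0"
    then have "0 \<le> e1 * e2 * e3" using e by simp
    then show False using h[of 0] by (simp add: hcubic_def)
  qed
  ultimately show thesis using that e h by blast
qed

lemma neg_cubic_nonneg_iff:
  fixes e1 e2 e3 s :: real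
  assumes "e1 < e2" "e2 < e3"
  shows "0 \<le> - ((s - e1) * (s - e2) * (s - e3)) \<longleftrightarrow> s \<le> e1 \<or> e2 \<le> s \<and> s \<le> e3"
proof -
  have "0 \<le> - ((s - e1) * (s - e2) * (s - e3)) \<longleftrightarrow> (s - e1) * ((s - e2) * (s - e3)) \<le> 0"
    by (simp add: mult.assoc)
  also have "\<dots> \<longleftrightarrow> s \<le> e1 \<or> e2 \<le> s \<and> s \<le> e3"
    using assms by (cases "s \<le> e1"; cases "s \<le> e2"; cases "s \<le> e3") (auto simp: mult_le_0_iff zero_le_mult_iff)
  finally show ?thesis .
qed

lemma hcubic_strict_decreasing:
  assumes "5 \<le> r" "s < t" "t \<le> 0"
  shows "hcubic r t < hcubic r s"
proof -
  have "hcubic r s - hcubic r t = (t - s) * (((s + t / 2)^2 + 3 / 4 * t^2) + (5 - r) * (s + t) + 8)"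
    unfolding hcubic_def by (simp add: algebra_simps power2_eq_square power3_eq_cube)
  moreover have "0 \<le> (5 - r) * (s + t)" using assms by (intro mult_nonpos_nonpos) auto
  moreover have "0 \<le> (s + t / 2)^2 + 3 / 4 * t^2" by simp
  ultimately have "0 < hcubic r s - hcubic r t" using assms by (simp add: add_nonneg_pos)
  then show ?thesis by simp
qed

lemma r_minus_neg: "r_minus < 0"
  and r_plus_gt_5: "5 < r_plus"
  and r_quadratic_factor: "r^2 - 11 * r - 1 = (r - r_plus) * (r - r_minus)"
proof -
  have "11 / 5 < sqrt 5" by (rule real_less_rsqrt) (simp add: power2_eq_square)
  then show "r_minus < 0" "5 < r_plus" unfolding r_minus_def r_plus_def by auto
  show "r^2 - 11 * r - 1 = (r - r_plus) * (r - r_minus)"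
    unfolding r_minus_def r_plus_def by (simp add: field_simps power2_eq_square)
qed

lemma discriminant_neg:
  "r < r_minus \<or> 0 < r \<and> r < r_plus \<Longrightarrow> r * (r^2 - 11 * r - 1) < 0"
  unfolding r_quadratic_factor using r_minus_neg r_plus_gt_5
  by (auto simp: mult_less_0_iff zero_less_mult_iff)

lemma discriminant_pos:
  "r_minus < r \<and> r < 0 \<or> r_plus < r \<Longrightarrow> 0 < r * (r^2 - 11 * r - 1)"
  unfolding r_quadratic_factor using r_minus_neg r_plus_gt_5
  by (auto simp: mult_less_0_iff zero_less_mult_iff)

section \<open>The unbounded branch\<close>

definition outer_branch :: "real \<Rightarrow> real \<Rightarrow> (real^3) set set" where
  "outer_branch r L = {pcls (sdz 1 1 0), pcls (sdz 1 (-1) 0), pcls (sdz 0 1 0)} \<union>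
     {pcls (sdz s d 1) | s d. (s \<le> L \<or> r - 1 < s) \<and> d^2 * (s + 1 - r) = - hcubic r s}"

lemma outer_branch_subset_Ecurve: "outer_branch r L \<subseteq> Ecurve r"
  by (auto simp: outer_branch_def pcls_in_Ecurve_iff sdz_eq_0_iff Qvec_sdz_affine) (simp_all add: Qvec_sdz)

lemma Ecurve_cases_outer_branch:
  assumes "r \<noteq> 0" "P \<in> Ecurve r"
  obtains "P \<in> outer_branch r L"
    | s d where "P = pcls (sdz s d 1)" "L < s" "s < r - 1" "0 \<le> hcubic r s"
      "d^2 * (s + 1 - r) = - hcubic r s"
  using assms(2)
proof (cases rule: Ecurve_cases)
  case (2 s d)
  show thesis
  proof (cases "L < s \<and> s < r - 1")
    case True
    then have "d^2 * (s + 1 - r) \<le> 0" by (simp add: mult_nonneg_nonpos)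
    then show thesis using True 2 that(2) by simp
  next
    case False
    then have "s \<le> L \<or> r - 1 < s" using 2(2) hcubic_neg[OF assms(1), of s] by force
    then show thesis using 2 that(1) unfolding outer_branch_def by blast
  qed
qed (use that(1) in \<open>auto simp: outer_branch_def\<close>)

lemma exists_curve_point_over:
  assumes "r \<noteq> 0" "r - 1 < s"
  obtains d where "d^2 * (s + 1 - r) = - hcubic r s"
proof
  have "0 \<le> - hcubic r s / (s + 1 - r)"
    using hcubic_neg[OF assms(1), of s] assms(2) by (intro divide_nonneg_pos) auto
  then show "(sqrt (- hcubic r s / (s + 1 - r)))^2 * (s + 1 - r) = - hcubic r s"
    using assms(2) by simp
qed

lemma outer_branch_unbounded:
  assumes "r \<noteq> 0"
  shows "\<not> bounded (affine_part (outer_branch r L))"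
proof
  assume "bounded (affine_part (outer_branch r L))"
  then obtain B where B: "\<And>p. p \<in> affine_part (outer_branch r L) \<Longrightarrow> norm p \<le> B"
    unfolding bounded_iff by blast
  define s where "s = \<bar>r\<bar> + 2 * \<bar>B\<bar> + 1"
  have "r - 1 < s" unfolding s_def by linarith
  then obtain d where "d^2 * (s + 1 - r) = - hcubic r s" using exists_curve_point_over[OF assms] by blast
  then have "pcls (sdz s d 1) \<in> outer_branch r L"
    using \<open>r - 1 < s\<close> unfolding outer_branch_def by blast
  moreover have "(s + d) / 2 + (s - d) / 2 = s" "(s + d) / 2 - (s - d) / 2 = d" by (simp_all add: field_simps)
  ultimately have "((s + d) / 2, (s - d) / 2) \<in> affine_part (outer_branch r L)"
    by (simp add: affine_part_iff)
  then have "norm ((s + d) / 2, (s - d) / 2) \<le> B" by (rule B)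
  then have "\<bar>(s + d) / 2\<bar> \<le> B" "\<bar>(s - d) / 2\<bar> \<le> B"
    using norm_fst_le[of "(s + d) / 2" "(s - d) / 2"] norm_snd_le[of "(s - d) / 2" "(s + d) / 2"] by auto
  then show False using \<open>(s + d) / 2 + (s - d) / 2 = s\<close> unfolding s_def by linarith
qed

lemma outer_branch_five_points:
  assumes "r \<noteq> 0" "r < 0 \<or> -1 \<le> L"
  shows "{pt 1 0 0, pt 0 1 0, pt 1 (-1) 0, pt (-1) 0 1, pt 0 (-1) 1} \<subseteq> outer_branch r L"
proof -
  have "pt 1 0 0 = pcls (sdz 1 1 0)" "pt 0 1 0 = pcls (sdz 1 (-1) 0)" "pt 1 (-1) 0 = pcls (sdz 0 1 0)"
    using pcls_sdz_scale[of 2 0 1 0] by (simp_all add: pt_eq_pcls_sdz)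
  moreover have "{pcls (sdz 1 1 0), pcls (sdz 1 (-1) 0), pcls (sdz 0 1 0)} \<subseteq> outer_branch r L"
    unfolding outer_branch_def by blast
  moreover have "pcls (sdz (-1) d 1) \<in> outer_branch r L" if "d = 1 \<or> d = -1" for d
  proof -
    have "(-1 \<le> L \<or> r - 1 < -1) \<and> d^2 * (-1 + 1 - r) = - hcubic r (-1)"
      using assms that by (auto simp: hcubic_minus_one)
    then show ?thesis unfolding outer_branch_def by blast
  qed
  moreover have "pt (-1) 0 1 = pcls (sdz (-1) (-1) 1)" "pt 0 (-1) 1 = pcls (sdz (-1) 1 1)"
    by (simp_all add: pt_eq_pcls_sdz)
  ultimately show ?thesis by simp
qed

text \<open>Connectedness is shown by covering the branch with four arcs, written in the coordinates
  \<open>(s : d : z)\<close>. Near the points at infinity \<open>[1:0:0]\<close> and \<open>[0:1:0]\<close> we use the chart \<open>(1 : u : t)\<close>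
  with \<open>t = 1/s\<close>, \<open>u = d/s\<close>, in which the curve is \<open>u\<^sup>2 = inf_chart_sq r t\<close>; near the asymptote
  \<open>s = r - 1\<close>, whose point at infinity is \<open>[1:-1:0]\<close>, we use the chart \<open>(s w : 1 : w)\<close> with
  \<open>w = 1/d\<close>, in which it is \<open>w\<^sup>2 = asym_chart_sq r s\<close>. The two arcs of each chart meet at
  \<open>s = L\<close> resp. \<open>s = r - 1\<close>, and the charts overlap at \<open>s = cutoff r\<close>.\<close>

definition inf_chart_sq :: "real \<Rightarrow> real \<Rightarrow> real" where
  "inf_chart_sq r t = (1 + (1 - r) * t + 4 * t * (1 + t)^2) / (1 + (1 - r) * t)"

definition asym_chart_sq :: "real \<Rightarrow> real \<Rightarrow> real" where
  "asym_chart_sq r s = (s - r + 1) / (- hcubic r s)"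

definition inf_arc :: "real \<Rightarrow> real \<Rightarrow> real \<Rightarrow> real^3" where
  "inf_arc r \<sigma> t = sdz 1 (\<sigma> * sqrt (inf_chart_sq r t)) t"

definition asym_arc :: "real \<Rightarrow> real \<Rightarrow> real \<Rightarrow> real^3" where
  "asym_arc r \<sigma> s = sdz (s * (\<sigma> * sqrt (asym_chart_sq r s))) 1 (\<sigma> * sqrt (asym_chart_sq r s))"

definition cutoff :: "real \<Rightarrow> real" where
  "cutoff r = \<bar>r\<bar> + 1"

lemma cutoff_pos: "0 < cutoff r" and cutoff_gt: "r - 1 < cutoff r"
  unfolding cutoff_def by auto

lemma inf_chart_sq_affine:
  assumes "s \<noteq> 0" "s \<noteq> r - 1" "d^2 * (s + 1 - r) = - hcubic r s"
  shows "inf_chart_sq r (1 / s) = (d / s)^2"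
proof -
  have num: "1 + (1 - r) * (1 / s) + 4 * (1 / s) * (1 + 1 / s)^2 = - hcubic r s / s^3"
    using assms(1) unfolding hcubic_def by (simp add: field_simps power2_eq_square power3_eq_cube)
  have den: "1 + (1 - r) * (1 / s) = (s + 1 - r) / s"
    using assms(1) by (simp add: field_simps)
  have "(d^2 * k / s^3) / (k / s) = (d / s)^2" if "k \<noteq> 0" for k
    using assms(1) that by (simp add: field_simps power2_eq_square power3_eq_cube)
  moreover have "s + 1 - r \<noteq> 0" using assms(2) by simp
  ultimately show ?thesis
    unfolding inf_chart_sq_def num unfolding den assms(3)[symmetric] by blast
qed

lemma asym_chart_sq_affine:
  assumes "s \<noteq> r - 1" "d^2 * (s + 1 - r) = - hcubic r s" "d \<noteq> 0"
  shows "asym_chart_sq r s = (1 / d)^2"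
proof -
  have "s - r + 1 = s + 1 - r" "d^2 * (s + 1 - r) \<noteq> 0" using assms(1,3) by simp_all
  then show ?thesis
    unfolding asym_chart_sq_def assms(2)[symmetric] using assms(3) by (simp add: field_simps power2_eq_square)
qed

lemma pcls_inf_arc_affine:
  assumes "s \<noteq> 0" "s \<noteq> r - 1" "d^2 * (s + 1 - r) = - hcubic r s" "\<sigma> * sqrt ((d / s)^2) = d / s"
  shows "pcls (inf_arc r \<sigma> (1 / s)) = pcls (sdz s d 1)"
proof -
  have "inf_arc r \<sigma> (1 / s) = (1 / s) *\<^sub>R sdz s d 1"
    unfolding inf_arc_def inf_chart_sq_affine[OF assms(1-3)] assms(4)
    using assms(1) by (simp add: scaleR_sdz)
  then show ?thesis using assms(1) by (simp add: pcls_scaleR)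
qed

lemma pcls_asym_arc_affine:
  assumes "s \<noteq> r - 1" "d^2 * (s + 1 - r) = - hcubic r s" "d \<noteq> 0" "\<sigma> * sqrt ((1 / d)^2) = 1 / d"
  shows "pcls (asym_arc r \<sigma> s) = pcls (sdz s d 1)"
proof -
  have "asym_arc r \<sigma> s = (1 / d) *\<^sub>R sdz s d 1"
    unfolding asym_arc_def asym_chart_sq_affine[OF assms(1-3)] assms(4)
    using assms(3) by (simp add: scaleR_sdz mult.commute)
  then show ?thesis using assms(3) by (simp add: pcls_scaleR)
qed

lemma sign_times_sqrt_square: "\<exists>\<sigma>\<in>{1, -1}. \<sigma> * sqrt (x^2) = (x::real)"
  by (cases "0 \<le> x") auto

locale least_root =
  fixes r L :: real
  assumes r_nonzero: "r \<noteq> 0" and L_neg: "L < 0" and L_less: "L < r - 1"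
    and hcubic_L: "hcubic r L = 0" and hcubic_nonneg_left: "\<And>s. s \<le> L \<Longrightarrow> 0 \<le> hcubic r s"
begin

abbreviation "I_inf \<equiv> {1 / L..1 / cutoff r}"
abbreviation "I_asym \<equiv> {r - 1..cutoff r}"

definition outer_arcs :: "(real^3) set set" where
  "outer_arcs = (\<Union>\<sigma>\<in>{1, -1}. (\<lambda>t. pcls (inf_arc r \<sigma> t)) ` I_inf)
     \<union> (\<Union>\<sigma>\<in>{1, -1}. (\<lambda>s. pcls (asym_arc r \<sigma> s)) ` I_asym)"

lemma zero_in_I_inf: "0 \<in> I_inf"
  using L_neg cutoff_pos[of r] by simp

lemma inf_den_pos:
  assumes "t \<in> I_inf"
  shows "0 < 1 + (1 - r) * t"
proof -
  have "1 + (1 - r) * (1 / L) = (L + 1 - r) / L" using L_neg by (simp add: field_simps)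
  then have at_L: "0 < 1 + (1 - r) * (1 / L)" using L_neg L_less by (simp add: divide_neg_neg)
  have "1 + (1 - r) * (1 / cutoff r) = (cutoff r + 1 - r) / cutoff r"
    using cutoff_pos[of r] by (simp add: field_simps)
  then have at_cutoff: "0 < 1 + (1 - r) * (1 / cutoff r)" using cutoff_pos[of r] cutoff_gt[of r] by simp
  show ?thesis
  proof (cases "0 \<le> 1 - r")
    case True
    then have "(1 - r) * (1 / L) \<le> (1 - r) * t" using assms by (intro mult_left_mono) auto
    then show ?thesis using at_L by linarith
  next
    case False
    then have "(1 - r) * (1 / cutoff r) \<le> (1 - r) * t" using assms by (intro mult_left_mono_neg) auto
    then show ?thesis using at_cutoff by linarith
  qed
qed

lemma inf_num_nonneg:
  assumes "t \<in> I_inf"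
  shows "0 \<le> 1 + (1 - r) * t + 4 * t * (1 + t)^2"
proof -
  have num: "1 + (1 - r) * t + 4 * t * (1 + t)^2 = - (t^3 * hcubic r (1 / t))" if "t \<noteq> 0"
    using that unfolding hcubic_def by (simp add: field_simps power2_eq_square power3_eq_cube)
  consider "t < 0" | "t = 0" | "0 < t" by linarith
  then show ?thesis
  proof cases
    case 1
    then have "1 / t \<le> L" using assms L_neg by (simp add: field_simps)
    then have "t^3 * hcubic r (1 / t) \<le> 0"
      using 1 hcubic_nonneg_left by (simp add: mult_nonpos_nonneg power_less_zero_eq less_imp_le)
    then show ?thesis using num 1 by simp
  next
    case 3
    then have "cutoff r \<le> 1 / t" using assms cutoff_pos[of r] by (simp add: field_simps)
    then have "r - 1 \<le> 1 / t" using cutoff_gt[of r] by linarith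
    then have "0 \<le> t^3 * (- hcubic r (1 / t))"
      using 3 hcubic_neg[OF r_nonzero, of "1 / t"] by (intro mult_nonneg_nonneg) auto
    then show ?thesis using num 3 by simp
  qed simp
qed

lemma Qvec_inf_arc:
  assumes "t \<in> I_inf" "\<sigma> \<in> {1, -1}"
  shows "Qvec r (inf_arc r \<sigma> t) = 0"
proof -
  have "0 \<le> inf_chart_sq r t"
    unfolding inf_chart_sq_def using inf_num_nonneg[OF assms(1)] inf_den_pos[OF assms(1)] by simp
  then have "(\<sigma> * sqrt (inf_chart_sq r t))^2 = inf_chart_sq r t"
    using assms(2) by (auto simp: power_mult_distrib)
  then show ?thesis
    unfolding inf_arc_def Qvec_sdz using inf_den_pos[OF assms(1)]
    by (simp add: inf_chart_sq_def field_simps)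
qed

lemma hcubic_I_asym: "s \<in> I_asym \<Longrightarrow> hcubic r s < 0"
  using hcubic_neg[OF r_nonzero] by simp

lemma Qvec_asym_arc:
  assumes "s \<in> I_asym" "\<sigma> \<in> {1, -1}"
  shows "Qvec r (asym_arc r \<sigma> s) = 0"
proof -
  define w where "w = \<sigma> * sqrt (asym_chart_sq r s)"
  have "0 \<le> asym_chart_sq r s"
    unfolding asym_chart_sq_def using hcubic_I_asym[OF assms(1)] assms(1) by (intro divide_nonneg_pos) auto
  then have w2: "w^2 = (s - r + 1) / (- hcubic r s)"
    using assms(2) unfolding w_def by (auto simp: power_mult_distrib asym_chart_sq_def)
  have "Qvec r (asym_arc r \<sigma> s) = w / 4 * (w^2 * (- hcubic r s) - (s + 1 - r))"
    unfolding asym_arc_def w_def[symmetric] Qvec_sdz hcubic_def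
    by (simp add: field_simps power2_eq_square power3_eq_cube)
  also have "\<dots> = 0" using hcubic_I_asym[OF assms(1)] unfolding w2 by simp
  finally show ?thesis .
qed

lemma inf_arc_in_outer_branch:
  assumes "t \<in> I_inf" "\<sigma> \<in> {1, -1}"
  shows "pcls (inf_arc r \<sigma> t) \<in> outer_branch r L"
proof (cases "t = 0")
  case True
  then show ?thesis using assms(2) by (auto simp: inf_arc_def inf_chart_sq_def outer_branch_def)
next
  case False
  define u where "u = \<sigma> * sqrt (inf_chart_sq r t)"
  have "inf_arc r \<sigma> t = sdz 1 u t" unfolding inf_arc_def u_def ..
  then have "pcls (inf_arc r \<sigma> t) = pcls (sdz (1 / t) (u / t) 1)"
    and "(u / t)^2 * (1 / t + 1 - r) = - hcubic r (1 / t)"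
    using Qvec_inf_arc[OF assms] False pcls_sdz_dehomogenize Qvec_sdz_dehomogenize by metis+
  moreover have "1 / t \<le> L \<or> r - 1 < 1 / t"
  proof (cases "t < 0")
    case True
    then show ?thesis using assms(1) L_neg by (simp add: field_simps)
  next
    case False
    then have "cutoff r \<le> 1 / t" using \<open>t \<noteq> 0\<close> assms(1) cutoff_pos[of r] by (simp add: field_simps)
    then show ?thesis using cutoff_gt[of r] by simp
  qed
  ultimately show ?thesis unfolding outer_branch_def by blast
qed

lemma asym_arc_in_outer_branch:
  assumes "s \<in> I_asym" "\<sigma> \<in> {1, -1}"
  shows "pcls (asym_arc r \<sigma> s) \<in> outer_branch r L"
proof (cases "s = r - 1")
  case True
  then show ?thesis by (simp add: asym_arc_def asym_chart_sq_def outer_branch_def)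
next
  case False
  define w where "w = \<sigma> * sqrt (asym_chart_sq r s)"
  have "0 < asym_chart_sq r s"
    unfolding asym_chart_sq_def using hcubic_I_asym[OF assms(1)] assms(1) False by (intro divide_pos_pos) auto
  then have "w \<noteq> 0" using assms(2) unfolding w_def by auto
  have "asym_arc r \<sigma> s = sdz (s * w) 1 w" unfolding asym_arc_def w_def ..
  then have "pcls (asym_arc r \<sigma> s) = pcls (sdz s (1 / w) 1)"
    and "(1 / w)^2 * (s + 1 - r) = - hcubic r s"
    using Qvec_asym_arc[OF assms] \<open>w \<noteq> 0\<close> pcls_sdz_dehomogenize Qvec_sdz_dehomogenize
    by (metis nonzero_mult_div_cancel_right)+
  moreover have "r - 1 < s" using assms(1) False by simp
  ultimately show ?thesis unfolding outer_branch_def by blast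
qed

lemma affine_point_in_outer_arcs:
  assumes "s \<le> L \<or> r - 1 < s" "d^2 * (s + 1 - r) = - hcubic r s"
  shows "pcls (sdz s d 1) \<in> outer_arcs"
proof -
  have sr: "s \<noteq> r - 1" using assms(1) L_less by auto
  show ?thesis
  proof (cases "r - 1 < s \<and> s \<le> cutoff r")
    case True
    then have "d \<noteq> 0" using assms(2) hcubic_neg[OF r_nonzero, of s] by auto
    obtain \<sigma> where \<sigma>: "\<sigma> \<in> {1, -1}" "\<sigma> * sqrt ((1 / d)^2) = 1 / d"
      using sign_times_sqrt_square by blast
    have "pcls (sdz s d 1) = pcls (asym_arc r \<sigma> s)"
      using pcls_asym_arc_affine[OF sr assms(2) \<open>d \<noteq> 0\<close> \<sigma>(2)] by simp
    moreover have "s \<in> I_asym" using True by simp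
    ultimately show ?thesis unfolding outer_arcs_def using \<sigma>(1) by blast
  next
    case False
    then have s: "s \<le> L \<or> cutoff r < s" using assms(1) by auto
    then have "s \<noteq> 0" using L_neg cutoff_pos[of r] by auto
    obtain \<sigma> where \<sigma>: "\<sigma> \<in> {1, -1}" "\<sigma> * sqrt ((d / s)^2) = d / s"
      using sign_times_sqrt_square by blast
    have "pcls (sdz s d 1) = pcls (inf_arc r \<sigma> (1 / s))"
      using pcls_inf_arc_affine[OF \<open>s \<noteq> 0\<close> sr assms(2) \<sigma>(2)] by simp
    moreover have "1 / s \<in> I_inf"
      using s L_neg cutoff_pos[of r] by (auto simp: field_simps)
    ultimately show ?thesis unfolding outer_arcs_def using \<sigma>(1) by blast
  qed
qed

lemma infinity_points_in_outer_arcs: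
  "{pcls (sdz 1 1 0), pcls (sdz 1 (-1) 0), pcls (sdz 0 1 0)} \<subseteq> outer_arcs"
proof -
  have inf: "pcls (inf_arc r \<sigma> 0) \<in> outer_arcs" if "\<sigma> \<in> {1, -1}" for \<sigma>
    unfolding outer_arcs_def using that zero_in_I_inf by blast
  have inf0: "inf_arc r \<sigma> 0 = sdz 1 \<sigma> 0" if "\<sigma> \<in> {1, -1}" for \<sigma>
    using that by (auto simp: inf_arc_def inf_chart_sq_def)
  have "r - 1 \<in> I_asym" using cutoff_gt[of r] by simp
  then have asym: "pcls (asym_arc r 1 (r - 1)) \<in> outer_arcs" unfolding outer_arcs_def by blast
  have asym0: "asym_arc r 1 (r - 1) = sdz 0 1 0" by (simp add: asym_arc_def asym_chart_sq_def)
  show ?thesis using inf[of 1] inf[of "-1"] inf0[of 1] inf0[of "-1"] asym asym0 by simp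
qed

lemma outer_branch_eq_arcs: "outer_branch r L = outer_arcs"
proof
  show "outer_arcs \<subseteq> outer_branch r L"
    unfolding outer_arcs_def using inf_arc_in_outer_branch asym_arc_in_outer_branch by blast
  show "outer_branch r L \<subseteq> outer_arcs"
  proof
    fix P assume "P \<in> outer_branch r L"
    then consider "P \<in> {pcls (sdz 1 1 0), pcls (sdz 1 (-1) 0), pcls (sdz 0 1 0)}"
      | s d where "P = pcls (sdz s d 1)" "s \<le> L \<or> r - 1 < s" "d^2 * (s + 1 - r) = - hcubic r s"
      unfolding outer_branch_def by blast
    then show "P \<in> outer_arcs"
      by cases (use infinity_points_in_outer_arcs affine_point_in_outer_arcs in auto)
  qed
qed

lemma connectedin_inf_arc: "connectedin RP2_top ((\<lambda>t. pcls (inf_arc r \<sigma> t)) ` I_inf)"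
proof -
  have "continuous_on I_inf (inf_chart_sq r)"
    unfolding inf_chart_sq_def using inf_den_pos by (intro continuous_intros) force+
  then have "continuous_on I_inf (inf_arc r \<sigma>)"
    unfolding inf_arc_def by (intro continuous_intros)
  then show ?thesis by (rule connectedin_pcls_image) (simp_all add: inf_arc_def sdz_eq_0_iff)
qed

lemma connectedin_asym_arc: "connectedin RP2_top ((\<lambda>s. pcls (asym_arc r \<sigma> s)) ` I_asym)"
proof -
  have "continuous_on I_asym (asym_chart_sq r)"
    unfolding asym_chart_sq_def using hcubic_I_asym by (intro continuous_intros) force+
  then have "continuous_on I_asym (asym_arc r \<sigma>)"
    unfolding asym_arc_def by (intro continuous_intros)
  then show ?thesis by (rule connectedin_pcls_image) (simp_all add: asym_arc_def sdz_eq_0_iff)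
qed

lemma inf_arc_meets_asym_arc: "pcls (inf_arc r 1 (1 / cutoff r)) = pcls (asym_arc r 1 (cutoff r))"
proof -
  obtain d where d: "d^2 * (cutoff r + 1 - r) = - hcubic r (cutoff r)"
    using exists_curve_point_over[OF r_nonzero cutoff_gt] .
  then have d': "\<bar>d\<bar>^2 * (cutoff r + 1 - r) = - hcubic r (cutoff r)" by simp
  have m: "cutoff r \<noteq> 0" "cutoff r \<noteq> r - 1" using cutoff_pos[of r] cutoff_gt[of r] by auto
  have "d \<noteq> 0" using d hcubic_neg[OF r_nonzero, of "cutoff r"] cutoff_gt[of r] by auto
  have "pcls (inf_arc r 1 (1 / cutoff r)) = pcls (sdz (cutoff r) \<bar>d\<bar> 1)"
    using cutoff_pos[of r] by (intro pcls_inf_arc_affine[OF m d']) simp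
  moreover have "pcls (asym_arc r 1 (cutoff r)) = pcls (sdz (cutoff r) \<bar>d\<bar> 1)"
    using \<open>d \<noteq> 0\<close> by (intro pcls_asym_arc_affine[OF m(2) d']) simp_all
  ultimately show ?thesis by simp
qed

lemma connectedin_outer_branch: "connectedin RP2_top (outer_branch r L)"
proof -
  define C where "C \<sigma> = (\<lambda>t. pcls (inf_arc r \<sigma> t)) ` I_inf" for \<sigma>
  define B where "B \<sigma> = (\<lambda>s. pcls (asym_arc r \<sigma> s)) ` I_asym" for \<sigma>
  have ends: "1 / L \<in> I_inf" "1 / cutoff r \<in> I_inf" "r - 1 \<in> I_asym" "cutoff r \<in> I_asym"
    using L_neg cutoff_pos[of r] cutoff_gt[of r] by (auto intro: order.trans[of _ 0])
  have "inf_chart_sq r (1 / L) = 0"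
    using inf_chart_sq_affine[of L r 0] L_neg L_less hcubic_L by simp
  then have "inf_arc r 1 (1 / L) = inf_arc r (-1) (1 / L)" by (simp add: inf_arc_def)
  then have "pcls (inf_arc r 1 (1 / L)) \<in> C 1 \<inter> C (-1)"
    unfolding C_def using ends(1) by (metis IntI image_eqI)
  then have C: "connectedin RP2_top (C 1 \<union> C (-1))"
    unfolding C_def by (intro connectedin_Un connectedin_inf_arc) blast
  have "asym_arc r 1 (r - 1) = asym_arc r (-1) (r - 1)" by (simp add: asym_arc_def asym_chart_sq_def)
  then have "pcls (asym_arc r 1 (r - 1)) \<in> B 1 \<inter> B (-1)"
    unfolding B_def using ends(3) by (metis IntI image_eqI)
  then have B: "connectedin RP2_top (B 1 \<union> B (-1))"
    unfolding B_def by (intro connectedin_Un connectedin_asym_arc) blast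
  have "pcls (asym_arc r 1 (cutoff r)) \<in> (C 1 \<union> C (-1)) \<inter> (B 1 \<union> B (-1))"
    unfolding C_def B_def using ends inf_arc_meets_asym_arc by (metis IntI UnI1 image_eqI)
  then have "connectedin RP2_top ((C 1 \<union> C (-1)) \<union> (B 1 \<union> B (-1)))"
    by (intro connectedin_Un C B) blast
  moreover have "outer_arcs = (C 1 \<union> C (-1)) \<union> (B 1 \<union> B (-1))"
    unfolding outer_arcs_def C_def B_def by simp
  ultimately show ?thesis using outer_branch_eq_arcs by simp
qed
end

section \<open>The oval\<close>

definition oval :: "real \<Rightarrow> real \<Rightarrow> real \<Rightarrow> (real^3) set set" where
  "oval r a b = {pcls (sdz s d 1) | s d. a \<le> s \<and> s \<le> b \<and> d^2 * (s + 1 - r) = - hcubic r s}"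

lemma oval_subset_Ecurve: "oval r a b \<subseteq> Ecurve r"
  by (auto simp: oval_def pcls_in_Ecurve_iff sdz_eq_0_iff Qvec_sdz_affine)

lemma curve_d_sq_le_s_sq:
  assumes "d^2 * (s + 1 - r) = - hcubic r s" "s < r - 1"
  shows "d^2 \<le> s^2" and "s \<noteq> -1 \<Longrightarrow> d^2 < s^2"
proof -
  have eq: "(s^2 - d^2) * (r - 1 - s) = 4 * (s + 1)^2"
    using assms(1) unfolding hcubic_def by (simp add: algebra_simps power2_eq_square power3_eq_cube)
  have pos: "0 < r - 1 - s" using assms(2) by simp
  have "0 \<le> (s^2 - d^2) * (r - 1 - s)" using eq by simp
  then show "d^2 \<le> s^2" using pos by (simp add: zero_le_mult_iff)
  show "d^2 < s^2" if "s \<noteq> -1"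
  proof -
    have "0 < (s^2 - d^2) * (r - 1 - s)" using eq that by simp
    then show ?thesis using pos by (simp add: zero_less_mult_iff)
  qed
qed

lemma oval_bounded:
  assumes "b < r - 1"
  shows "bounded (affine_part (oval r a b))"
  unfolding bounded_iff
proof (intro exI ballI)
  fix p assume "p \<in> affine_part (oval r a b)"
  then obtain x y s d where p: "p = (x, y)" "pcls (sdz (x + y) (x - y) 1) = pcls (sdz s d 1)"
      and s: "a \<le> s" "s \<le> b" and d: "d^2 * (s + 1 - r) = - hcubic r s"
    unfolding affine_part_iff[symmetric] oval_def by (cases p) (auto simp: affine_part_iff)
  then have "x + y = s" "x - y = d" using pcls_sdz_affine_inj by blast+
  moreover have "\<bar>d\<bar> \<le> \<bar>s\<bar>" using curve_d_sq_le_s_sq(1)[OF d] s assms by (simp add: abs_le_square_iff)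
  ultimately have "\<bar>x\<bar> \<le> \<bar>s\<bar>" "\<bar>y\<bar> \<le> \<bar>s\<bar>"
    unfolding abs_le_iff using abs_ge_self[of s] abs_ge_minus_self[of s] by linarith+
  moreover have "\<bar>s\<bar> \<le> \<bar>a\<bar> + \<bar>b\<bar>"
    using s abs_ge_self[of b] abs_ge_minus_self[of a] abs_ge_zero[of a] abs_ge_zero[of b]
    unfolding abs_le_iff by linarith
  ultimately have "\<bar>x\<bar> + \<bar>y\<bar> \<le> 2 * (\<bar>a\<bar> + \<bar>b\<bar>)" by simp
  then show "norm p \<le> 2 * (\<bar>a\<bar> + \<bar>b\<bar>)" using norm_Pair_le[of x y] p(1) by simp
qed

lemma oval_subset_quadrant:
  assumes "b < r - 1"
  shows "b < -1 \<Longrightarrow> oval r a b \<subseteq> {pt x y 1 | x y. x < 0 \<and> y < 0}"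
    and "0 < a \<Longrightarrow> oval r a b \<subseteq> {pt x y 1 | x y. 0 < x \<and> 0 < y}"
proof -
  have \<section>: "\<bar>d\<bar> < \<bar>s\<bar> \<and> pcls (sdz s d 1) = pt ((s + d) / 2) ((s - d) / 2) 1"
    if "a \<le> s" "s \<le> b" "s \<noteq> -1" "d^2 * (s + 1 - r) = - hcubic r s" for s d
    using curve_d_sq_le_s_sq(2)[OF that(4)] that assms abs_le_square_iff[of s d]
    by (simp add: not_le[symmetric] pcls_sdz_eq_pt)
  show "oval r a b \<subseteq> {pt x y 1 | x y. x < 0 \<and> y < 0}" if "b < -1"
  proof
    fix P assume "P \<in> oval r a b"
    then obtain s d where "P = pcls (sdz s d 1)" "a \<le> s" "s \<le> b" "d^2 * (s + 1 - r) = - hcubic r s"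
      unfolding oval_def by blast
    with \<section>[of s d] that have "P = pt ((s + d) / 2) ((s - d) / 2) 1" "(s + d) / 2 < 0" "(s - d) / 2 < 0"
      by (auto simp: abs_less_iff)
    then show "P \<in> {pt x y 1 | x y. x < 0 \<and> y < 0}" by blast
  qed
  show "oval r a b \<subseteq> {pt x y 1 | x y. 0 < x \<and> 0 < y}" if "0 < a"
  proof
    fix P assume "P \<in> oval r a b"
    then obtain s d where "P = pcls (sdz s d 1)" "a \<le> s" "s \<le> b" "d^2 * (s + 1 - r) = - hcubic r s"
      unfolding oval_def by blast
    with \<section>[of s d] that have "P = pt ((s + d) / 2) ((s - d) / 2) 1" "0 < (s + d) / 2" "0 < (s - d) / 2"
      by (auto simp: abs_less_iff)
    then show "P \<in> {pt x y 1 | x y. 0 < x \<and> 0 < y}" by blast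
  qed
qed

definition oval_arc :: "real \<Rightarrow> real \<Rightarrow> real \<Rightarrow> real^3" where
  "oval_arc r \<sigma> s = sdz s (\<sigma> * sqrt (hcubic r s / (r - 1 - s))) 1"

lemma connectedin_oval:
  assumes "a \<le> b" "b < r - 1" "hcubic r a = 0" and nonneg: "\<And>s. a \<le> s \<Longrightarrow> s \<le> b \<Longrightarrow> 0 \<le> hcubic r s"
  shows "connectedin RP2_top (oval r a b)"
proof -
  define A where "A \<sigma> = (\<lambda>s. pcls (oval_arc r \<sigma> s)) ` {a..b}" for \<sigma>
  have d_sq: "d^2 * (s + 1 - r) = - hcubic r s \<longleftrightarrow> d^2 = hcubic r s / (r - 1 - s)" if "s \<le> b" for s d
    using that assms(2) by (auto simp: field_simps)
  have "oval r a b = A 1 \<union> A (-1)"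
  proof (intro equalityI subsetI)
    fix P assume "P \<in> oval r a b"
    then obtain s d where P: "P = pcls (sdz s d 1)" "a \<le> s" "s \<le> b" "d^2 = hcubic r s / (r - 1 - s)"
      unfolding oval_def using d_sq by blast
    obtain \<sigma> where "\<sigma> \<in> {1, -1}" "\<sigma> * sqrt (d^2) = d" using sign_times_sqrt_square by blast
    then show "P \<in> A 1 \<union> A (-1)" unfolding A_def oval_arc_def using P by auto
  next
    fix P assume "P \<in> A 1 \<union> A (-1)"
    then obtain \<sigma> s where P: "\<sigma> \<in> {1, -1}" "a \<le> s" "s \<le> b" "P = pcls (oval_arc r \<sigma> s)"
      unfolding A_def by fastforce
    have "0 \<le> hcubic r s / (r - 1 - s)" using nonneg[OF P(2,3)] P(3) assms(2) by simp
    then have "(\<sigma> * sqrt (hcubic r s / (r - 1 - s)))^2 = hcubic r s / (r - 1 - s)"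
      using P(1) by (auto simp: power_mult_distrib)
    then have "(\<sigma> * sqrt (hcubic r s / (r - 1 - s)))^2 * (s + 1 - r) = - hcubic r s"
      using d_sq[OF P(3)] by blast
    then show "P \<in> oval r a b" unfolding oval_def using P(2,3) P(4)[unfolded oval_arc_def] by blast
  qed
  moreover have "connectedin RP2_top (A \<sigma>)" for \<sigma>
    unfolding A_def oval_arc_def using assms(2)
    by (intro connectedin_pcls_image continuous_intros) (auto simp: sdz_eq_0_iff)
  moreover have "oval_arc r 1 a = oval_arc r (-1) a" using assms(3) by (simp add: oval_arc_def)
  then have "pcls (oval_arc r 1 a) \<in> A 1 \<inter> A (-1)"
    unfolding A_def using assms(1) by (metis IntI atLeastAtMost_iff image_eqI order.refl)
  ultimately show ?thesis by (metis connectedin_Un empty_iff)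
qed

section \<open>Separating the oval from the unbounded branch\<close>

text \<open>The oval lies over \<open>e\<^sub>2 \<le> s \<le> e\<^sub>3\<close>, the unbounded branch over \<open>s \<le> L\<close>, over \<open>s > r - 1\<close>
  and at infinity. A vertical strip separates them in the affine part; the point \<open>[1:-1:0]\<close> of the
  branch is caught by \<open>\<bar>d\<bar> > K (\<bar>s\<bar> + \<bar>z\<bar>)\<close>, which the oval avoids since \<open>\<bar>d\<bar> \<le> \<bar>s\<bar>\<close> there.\<close>

locale oval_roots = least_root +
  fixes e2 e3 :: real
  assumes L_less_e2: "L < e2" and e2_less_e3: "e2 < e3" and e3_less: "e3 < r - 1"
    and hcubic_e2: "hcubic r e2 = 0"
    and hcubic_nonneg_iff: "\<And>s. L < s \<Longrightarrow> s < r - 1 \<Longrightarrow> 0 \<le> hcubic r s \<longleftrightarrow> e2 \<le> s \<and> s \<le> e3"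
begin

definition "c_left = (L + e2) / 2"
definition "c_right = (e3 + r - 1) / 2"
definition "K = \<bar>e2\<bar> + \<bar>e3\<bar> + 1"

definition oval_nbhd :: "(real^3) set set" where
  "oval_nbhd = pos_region (\<lambda>v. (coord_s v - c_left * v$3) * v$3) \<inter>
     pos_region (\<lambda>v. (c_right * v$3 - coord_s v) * v$3)"

definition branch_nbhd :: "(real^3) set set" where
  "branch_nbhd = pos_region (\<lambda>v. (coord_s v - c_left * v$3) * (coord_s v - c_right * v$3)) \<union>
     pos_region (\<lambda>v. \<bar>coord_d v\<bar> - K * (\<bar>coord_s v\<bar> + \<bar>v$3\<bar>))"

lemma nbhd_quadratic_homogeneous:
  fixes c :: real and v :: "real^3"
  assumes "c \<noteq> 0"
  shows "\<exists>k>0. (coord_s (c *\<^sub>R v) - c_left * (c *\<^sub>R v)$3) * (c *\<^sub>R v)$3 = k * ((coord_s v - c_left * v$3) * v$3)"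
    and "\<exists>k>0. (c_right * (c *\<^sub>R v)$3 - coord_s (c *\<^sub>R v)) * (c *\<^sub>R v)$3 = k * ((c_right * v$3 - coord_s v) * v$3)"
    and "\<exists>k>0. (coord_s (c *\<^sub>R v) - c_left * (c *\<^sub>R v)$3) * (coord_s (c *\<^sub>R v) - c_right * (c *\<^sub>R v)$3)
               = k * ((coord_s v - c_left * v$3) * (coord_s v - c_right * v$3))"
  using assms by (auto intro!: exI[of _ "c * c"] simp: algebra_simps linorder_neq_iff zero_less_mult_iff)

lemma nbhd_abs_homogeneous:
  fixes c :: real and v :: "real^3"
  assumes "c \<noteq> 0"
  shows "\<exists>k>0. \<bar>coord_d (c *\<^sub>R v)\<bar> - K * (\<bar>coord_s (c *\<^sub>R v)\<bar> + \<bar>(c *\<^sub>R v)$3\<bar>)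
               = k * (\<bar>coord_d v\<bar> - K * (\<bar>coord_s v\<bar> + \<bar>v$3\<bar>))"
  using assms by (auto intro!: exI[of _ "\<bar>c\<bar>"] simp: algebra_simps abs_mult)

lemma openin_oval_nbhd: "openin RP2_top oval_nbhd"
  unfolding oval_nbhd_def using nbhd_quadratic_homogeneous
  by (intro openin_Int openin_pos_region) (auto intro!: continuous_intros)

lemma openin_branch_nbhd: "openin RP2_top branch_nbhd"
  unfolding branch_nbhd_def using nbhd_quadratic_homogeneous nbhd_abs_homogeneous
  by (intro openin_Un openin_pos_region) (auto intro!: continuous_intros)

lemma pcls_sdz_in_nbhd_iff:
  assumes "sdz s d z \<noteq> 0"
  shows "pcls (sdz s d z) \<in> oval_nbhd \<longleftrightarrow> 0 < (s - c_left * z) * z \<and> 0 < (c_right * z - s) * z"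
    and "pcls (sdz s d z) \<in> branch_nbhd \<longleftrightarrow>
           0 < (s - c_left * z) * (s - c_right * z) \<or> K * (\<bar>s\<bar> + \<bar>z\<bar>) < \<bar>d\<bar>"
  unfolding oval_nbhd_def branch_nbhd_def
  using pcls_in_pos_region_iff[OF nbhd_quadratic_homogeneous(1) assms]
    pcls_in_pos_region_iff[OF nbhd_quadratic_homogeneous(2) assms]
    pcls_in_pos_region_iff[OF nbhd_quadratic_homogeneous(3) assms]
    pcls_in_pos_region_iff[OF nbhd_abs_homogeneous assms]
  by auto

lemma separation_constants: "L < c_left" "c_left < e2" "e3 < c_right" "c_right < r - 1" "1 \<le> K"
  unfolding c_left_def c_right_def K_def using L_less_e2 e3_less by auto

lemma outer_branch_subset_branch_nbhd: "outer_branch r L \<subseteq> branch_nbhd - oval_nbhd"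
proof
  fix P assume "P \<in> outer_branch r L"
  then consider "P \<in> {pcls (sdz 1 1 0), pcls (sdz 1 (-1) 0), pcls (sdz 0 1 0)}"
    | s d where "P = pcls (sdz s d 1)" "s \<le> L \<or> r - 1 < s"
    unfolding outer_branch_def by blast
  then show "P \<in> branch_nbhd - oval_nbhd"
  proof cases
    case 1
    then show ?thesis using separation_constants by (auto simp: pcls_sdz_in_nbhd_iff sdz_eq_0_iff)
  next
    case (2 s d)
    then have "0 < (s - c_left) * (s - c_right)" "\<not> (0 < s - c_left \<and> 0 < c_right - s)"
      using separation_constants e2_less_e3 by (auto simp: zero_less_mult_iff)
    then show ?thesis using 2 by (simp add: pcls_sdz_in_nbhd_iff sdz_eq_0_iff)
  qed
qed

lemma oval_subset_oval_nbhd: "oval r e2 e3 \<subseteq> oval_nbhd - branch_nbhd"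
proof
  fix P assume "P \<in> oval r e2 e3"
  then obtain s d where P: "P = pcls (sdz s d 1)" "e2 \<le> s" "s \<le> e3" "d^2 * (s + 1 - r) = - hcubic r s"
    unfolding oval_def by blast
  have "\<bar>d\<bar> \<le> \<bar>s\<bar>" using curve_d_sq_le_s_sq(1)[OF P(4)] P(3) e3_less by (simp add: abs_le_square_iff)
  moreover have "\<bar>s\<bar> \<le> K * (\<bar>s\<bar> + 1)"
    using mult_right_mono[OF separation_constants(5), of "\<bar>s\<bar> + 1"] by simp
  moreover have "(s - c_left) * (s - c_right) < 0"
    using P(2,3) separation_constants by (intro mult_pos_neg) auto
  ultimately show "P \<in> oval_nbhd - branch_nbhd"
    using P separation_constants by (simp add: pcls_sdz_in_nbhd_iff sdz_eq_0_iff)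
qed

lemma Ecurve_eq_Un: "Ecurve r = outer_branch r L \<union> oval r e2 e3"
proof
  show "outer_branch r L \<union> oval r e2 e3 \<subseteq> Ecurve r"
    using outer_branch_subset_Ecurve oval_subset_Ecurve by blast
  show "Ecurve r \<subseteq> outer_branch r L \<union> oval r e2 e3"
  proof
    fix P assume "P \<in> Ecurve r"
    then consider "P \<in> outer_branch r L"
      | s d where "P = pcls (sdz s d 1)" "L < s" "s < r - 1" "0 \<le> hcubic r s"
        "d^2 * (s + 1 - r) = - hcubic r s"
      by (rule Ecurve_cases_outer_branch[OF r_nonzero])
    then show "P \<in> outer_branch r L \<union> oval r e2 e3"
    proof cases
      case (2 s d)
      then show ?thesis using hcubic_nonneg_iff unfolding oval_def by blast
    qed simp
  qed
qed

lemma connected_components_of_Ecurve: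
  "connected_components_of (subtopology RP2_top (Ecurve r)) = {outer_branch r L, oval r e2 e3}"
proof (rule connected_components_of_clopen_pair)
  show "topspace (subtopology RP2_top (Ecurve r)) = outer_branch r L \<union> oval r e2 e3"
    by (subst topspace_Ecurve) (rule Ecurve_eq_Un)
  show "outer_branch r L \<inter> oval r e2 e3 = {}"
    using outer_branch_subset_branch_nbhd oval_subset_oval_nbhd by blast
  show "outer_branch r L \<noteq> {}" unfolding outer_branch_def by blast
  have "pcls (sdz e2 0 1) \<in> oval r e2 e3" unfolding oval_def using e2_less_e3 hcubic_e2 by force
  then show "oval r e2 e3 \<noteq> {}" by blast
  show "connectedin (subtopology RP2_top (Ecurve r)) (outer_branch r L)"
    using connectedin_outer_branch outer_branch_subset_Ecurve by (simp add: connectedin_subtopology)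
  have "connectedin RP2_top (oval r e2 e3)"
    using e2_less_e3 e3_less hcubic_e2 hcubic_nonneg_iff L_less_e2
    by (intro connectedin_oval) auto
  then show "connectedin (subtopology RP2_top (Ecurve r)) (oval r e2 e3)"
    using oval_subset_Ecurve by (simp add: connectedin_subtopology)
  have "outer_branch r L = branch_nbhd \<inter> Ecurve r" "oval r e2 e3 = oval_nbhd \<inter> Ecurve r"
    using Ecurve_eq_Un outer_branch_subset_branch_nbhd oval_subset_oval_nbhd by blast+
  then show "openin (subtopology RP2_top (Ecurve r)) (outer_branch r L)"
      "openin (subtopology RP2_top (Ecurve r)) (oval r e2 e3)"
    unfolding openin_subtopology using openin_branch_nbhd openin_oval_nbhd by blast+
qed

end

section \<open>Intersection with the coordinate axes and the line at infinity\<close>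

lemma pt_scale: "c \<noteq> 0 \<Longrightarrow> pt (c * x) (c * y) (c * z) = pt x y z"
  unfolding pt_eq_pcls_sdz using pcls_sdz_scale[of c "x + y" "x - y" z] by (simp add: algebra_simps)

lemma Ecurve_inter_axes:
  "Ecurve r \<inter> (line_x0 \<union> line_y0 \<union> line_z0) \<subseteq> {pt 1 0 0, pt 0 1 0, pt 1 (-1) 0, pt (-1) 0 1, pt 0 (-1) 1}"
proof
  fix P assume P: "P \<in> Ecurve r \<inter> (line_x0 \<union> line_y0 \<union> line_z0)"
  then obtain x y z where xyz: "P = pt x y z" "(x, y, z) \<noteq> (0, 0, 0)" "x = 0 \<or> y = 0 \<or> z = 0"
    unfolding line_x0_def line_y0_def line_z0_def by blast
  have "vector [x, y, z] \<noteq> (0 :: real^3)" using xyz(2) by (auto simp: vec_eq_iff forall_3)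
  then have "Qr r x y z = 0" using P xyz(1) by (simp add: pt_def pcls_in_Ecurve_iff Qvec_def)
  moreover have "Qr r 0 y z = z * (y + z)^2" "Qr r x 0 z = z * (x + z)^2" "Qr r x y 0 = x * y * (x + y)"
    unfolding Qr_def by (simp_all add: algebra_simps power2_eq_square power3_eq_cube)
  ultimately consider "x = 0" "z = 0" | "y = 0" "z = 0" | "z = 0" "y = - x" | "x = 0" "y = - z" | "y = 0" "x = - z"
    using xyz(3) by auto
  then show "P \<in> {pt 1 0 0, pt 0 1 0, pt 1 (-1) 0, pt (-1) 0 1, pt 0 (-1) 1}"
  proof cases
    case 1
    then show ?thesis using xyz(1,2) pt_scale[of y 0 1 0] by simp
  next
    case 2
    then show ?thesis using xyz(1,2) pt_scale[of x 1 0 0] by simp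
  next
    case 3
    then show ?thesis using xyz(1,2) pt_scale[of x 1 "-1" 0] by simp
  next
    case 4
    then show ?thesis using xyz(1,2) pt_scale[of z 0 "-1" 1] by simp
  next
    case 5
    then show ?thesis using xyz(1,2) pt_scale[of z "-1" 0 1] by simp
  qed
qed

lemma five_points_on_axes:
  "{pt 1 0 0, pt 0 1 0, pt 1 (-1) 0, pt (-1) 0 1, pt 0 (-1) 1} \<subseteq> line_x0 \<union> line_y0 \<union> line_z0"
  unfolding line_x0_def line_y0_def line_z0_def by fastforce

lemma inter_axes_eq_five_points:
  assumes "{pt 1 0 0, pt 0 1 0, pt 1 (-1) 0, pt (-1) 0 1, pt 0 (-1) 1} \<subseteq> C" "C \<subseteq> Ecurve r"
  shows "C \<inter> (line_x0 \<union> line_y0 \<union> line_z0) = {pt 1 0 0, pt 0 1 0, pt 1 (-1) 0, pt (-1) 0 1, pt 0 (-1) 1}"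
proof
  show "C \<inter> (line_x0 \<union> line_y0 \<union> line_z0) \<subseteq> {pt 1 0 0, pt 0 1 0, pt 1 (-1) 0, pt (-1) 0 1, pt 0 (-1) 1}"
    using assms(2) Ecurve_inter_axes[of r] by blast
  show "{pt 1 0 0, pt 0 1 0, pt 1 (-1) 0, pt (-1) 0 1, pt 0 (-1) 1} \<subseteq> C \<inter> (line_x0 \<union> line_y0 \<union> line_z0)"
    using assms(1) five_points_on_axes by (rule Int_greatest)
qed

section \<open>The connected components\<close>

definition main_branch :: "(real^3) set set \<Rightarrow> bool" where
  "main_branch C \<longleftrightarrow> \<not> bounded (affine_part C)
     \<and> {pt 1 0 0, pt 0 1 0, pt 1 (-1) 0, pt (-1) 0 1, pt 0 (-1) 1} \<subseteq> C
     \<and> C \<inter> (line_x0 \<union> line_y0 \<union> line_z0) = {pt 1 0 0, pt 0 1 0, pt 1 (-1) 0, pt (-1) 0 1, pt 0 (-1) 1}"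

lemma main_branch_outer_branch:
  assumes "r \<noteq> 0" "r < 0 \<or> -1 \<le> L"
  shows "main_branch (outer_branch r L)"
  unfolding main_branch_def
  using outer_branch_unbounded[OF assms(1)] outer_branch_five_points[OF assms]
    inter_axes_eq_five_points[OF outer_branch_five_points[OF assms] outer_branch_subset_Ecurve]
  by (intro conjI)

lemma components_one_root:
  assumes "r < r_minus \<or> 0 < r \<and> r < r_plus"
  obtains C where "main_branch C" "connected_components_of (subtopology RP2_top (Ecurve r)) = {C}"
proof -
  have "r \<noteq> 0" using assms r_minus_neg by auto
  obtain L where L: "L < 0" "L < r - 1" "hcubic r L = 0" "\<And>s. 0 \<le> hcubic r s \<longleftrightarrow> s \<le> L"
    using hcubic_one_root[OF \<open>r \<noteq> 0\<close> discriminant_neg[OF assms]] by blast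
  then interpret least_root r L by unfold_locales (use \<open>r \<noteq> 0\<close> in auto)
  have "Ecurve r \<subseteq> outer_branch r L"
  proof
    fix P assume "P \<in> Ecurve r"
    then consider "P \<in> outer_branch r L" | s where "L < s" "0 \<le> hcubic r s"
      by (rule Ecurve_cases_outer_branch[OF \<open>r \<noteq> 0\<close>])
    then show "P \<in> outer_branch r L" using L(4) by cases force+
  qed
  then have "Ecurve r = outer_branch r L" using outer_branch_subset_Ecurve by blast
  then have top: "topspace (subtopology RP2_top (Ecurve r)) = outer_branch r L"
    unfolding topspace_Ecurve .
  have "pcls (sdz 1 1 0) \<in> outer_branch r L" unfolding outer_branch_def by blast
  then have "subtopology RP2_top (Ecurve r) \<noteq> trivial_topology"
    using top by (metis empty_iff null_topspace_iff_trivial)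
  moreover have "connected_space (subtopology RP2_top (Ecurve r))"
    using connectedin_outer_branch \<open>Ecurve r = outer_branch r L\<close> by (simp add: connectedin_def)
  ultimately have "connected_components_of (subtopology RP2_top (Ecurve r)) = {outer_branch r L}"
    using top connected_components_of_eq_singleton[of _ "outer_branch r L"] by blast
  moreover have "r < 0 \<or> -1 \<le> L" using L(4)[of "-1"] hcubic_minus_one[of r] by auto
  ultimately show thesis using that main_branch_outer_branch[OF \<open>r \<noteq> 0\<close>] by blast
qed

lemma components_three_roots:
  assumes "r_minus < r \<and> r < 0 \<or> r_plus < r"
  obtains C D where "main_branch C"
    "connected_components_of (subtopology RP2_top (Ecurve r)) = {C, D}" "D \<noteq> C"
    "bounded (affine_part D)"
    "r_minus < r \<and> r < 0 \<longrightarrow> D \<subseteq> {pt x y 1 | x y. x < 0 \<and> y < 0}"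
    "r_plus < r \<longrightarrow> D \<subseteq> {pt x y 1 | x y. 0 < x \<and> 0 < y}"
proof -
  have "r \<noteq> 0" using assms r_plus_gt_5 by auto
  obtain e1 e2 e3 where e: "e1 < e2" "e2 < e3" "e3 < r - 1" "e1 < 0"
      and h: "\<And>s. hcubic r s = - ((s - e1) * (s - e2) * (s - e3))"
    using hcubic_three_roots[OF \<open>r \<noteq> 0\<close> discriminant_pos[OF assms]] by blast
  have sign: "0 \<le> hcubic r s \<longleftrightarrow> s \<le> e1 \<or> e2 \<le> s \<and> s \<le> e3" for s
    unfolding h using neg_cubic_nonneg_iff[OF e(1,2)] .
  have "hcubic r e1 = 0" "hcubic r e2 = 0" "e1 < r - 1" using e by (simp_all add: h)
  then interpret oval_roots r e1 e2 e3
    by unfold_locales (simp_all add: \<open>r \<noteq> 0\<close> e sign)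
  have e2_pos: "0 < e2" if "r_plus < r"
  proof (rule ccontr)
    assume "\<not> 0 < e2"
    then have "hcubic r e2 < hcubic r e1"
      using hcubic_strict_decreasing[OF _ e(1)] that r_plus_gt_5 by simp
    then show False by (simp add: h)
  qed
  have "-1 \<le> e1" if "r_plus < r"
  proof -
    have "0 \<le> hcubic r (-1)" using that r_plus_gt_5 by (simp add: hcubic_minus_one)
    then show ?thesis using sign[of "-1"] e2_pos[OF that] by linarith
  qed
  then have main: "main_branch (outer_branch r e1)"
    using assms by (intro main_branch_outer_branch[OF \<open>r \<noteq> 0\<close>]) blast
  have "pcls (sdz 1 1 0) \<in> outer_branch r e1" "pcls (sdz 1 1 0) \<notin> oval r e2 e3"
    unfolding outer_branch_def oval_def using pcls_sdz_affine_ne_infinity by (auto simp: eq_commute)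
  then have ne: "oval r e2 e3 \<noteq> outer_branch r e1" by blast
  have "r_minus < r \<and> r < 0 \<longrightarrow> oval r e2 e3 \<subseteq> {pt x y 1 | x y. x < 0 \<and> y < 0}"
    and "r_plus < r \<longrightarrow> oval r e2 e3 \<subseteq> {pt x y 1 | x y. 0 < x \<and> 0 < y}"
    using oval_subset_quadrant[OF e(3)] e(3) e2_pos by simp_all
  then show thesis by (rule that[OF main connected_components_of_Ecurve ne oval_bounded[OF e(3)]])
qed

theorem lemma3p2:
  fixes r :: real
  assumes "r \<noteq> 0" and "r \<noteq> r_minus" and "r \<noteq> r_plus"
  shows "\<exists>C \<in> connected_components_of (subtopology RP2_top (Ecurve r)).
     \<not> bounded (affine_part C)
   \<and> {pt 1 0 0, pt 0 1 0, pt 1 (-1) 0, pt (-1) 0 1, pt 0 (-1) 1} \<subseteq> C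
   \<and> C \<inter> (line_x0 \<union> line_y0 \<union> line_z0)
       = {pt 1 0 0, pt 0 1 0, pt 1 (-1) 0, pt (-1) 0 1, pt 0 (-1) 1}
   \<and> ((r < r_minus \<or> (0 < r \<and> r < r_plus)) \<longrightarrow>
        connected_components_of (subtopology RP2_top (Ecurve r)) = {C})
   \<and> ((r_minus < r \<and> r < 0) \<longrightarrow>
        (\<exists>D. connected_components_of (subtopology RP2_top (Ecurve r)) = {C, D} \<and> D \<noteq> C
             \<and> bounded (affine_part D) \<and> D \<subseteq> {pt x y 1 | x y. x < 0 \<and> y < 0}))
   \<and> (r_plus < r \<longrightarrow>
        (\<exists>D. connected_components_of (subtopology RP2_top (Ecurve r)) = {C, D} \<and> D \<noteq> C
             \<and> bounded (affine_part D) \<and> D \<subseteq> {pt x y 1 | x y. 0 < x \<and> 0 < y}))"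
proof -
  consider "r < r_minus \<or> 0 < r \<and> r < r_plus" | "r_minus < r \<and> r < 0 \<or> r_plus < r"
    using assms r_minus_neg r_plus_gt_5 by linarith
  then show ?thesis
  proof cases
    case 1
    then obtain C where "main_branch C" "connected_components_of (subtopology RP2_top (Ecurve r)) = {C}"
      by (rule components_one_root)
    moreover have "\<not> (r_minus < r \<and> r < 0)" "\<not> r_plus < r" using 1 r_minus_neg r_plus_gt_5 by linarith+
    ultimately show ?thesis unfolding main_branch_def
      by (intro bexI[of _ C] conjI impI) (simp_all only: insertI1 simp_thms)
  next
    case 2
    then obtain C D where "main_branch C"
        "connected_components_of (subtopology RP2_top (Ecurve r)) = {C, D}" "D \<noteq> C"
        "bounded (affine_part D)"
        "r_minus < r \<and> r < 0 \<longrightarrow> D \<subseteq> {pt x y 1 | x y. x < 0 \<and> y < 0}"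
        "r_plus < r \<longrightarrow> D \<subseteq> {pt x y 1 | x y. 0 < x \<and> 0 < y}"
      by (rule components_three_roots)
    moreover have "\<not> (r < r_minus \<or> 0 < r \<and> r < r_plus)" using 2 r_minus_neg r_plus_gt_5 by linarith
    ultimately show ?thesis unfolding main_branch_def
      by (intro bexI[of _ C] conjI impI exI[of _ D]) (simp_all only: insertI1 simp_thms)
  qed
qed

end
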